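(* Let $k\ge1$, $f\in P_k$ and $t\in[0,h(f)]$. For $1\le i\le k$, we have $t_i\neq0$ if and only if there exists $r\in\mathbb{R}$ such that $|\{j\in\{0,\dots,k\}:\phi_f(t)_j>r\}|=i$. Moreover, if $r\in\mathbb{R}$ satisfies $|\{j:\phi_f(t)_j>r\}|=i$ and $g:\{0,\dots,k\}\to\{0,\dots,k\}$ is defined by $g(j)=i$ if $\phi_f(t)_j\le r$ and $g(j)=0$ if $\phi_f(t)_j>r$, then $g\in P_k$, $h(g)=e_i$ and $g\le f$.
   Context: A $k$-placing is a function $f:\{0,\dots,k\}\to\{0,\dots,k\}$ with $f(j)=|\{i:f(i)<f(j)\}|$ for all $j$; $P_k$ is the set of $k$-placings with pointwise order. The height $h:P_k\to\mathbb{N}^k$ is $h(f)_i=1$ if $f^{-1}(i)\ne\emptyset$, else $0$ ($1\le i\le k$); $e_1,\dots,e_k$ are the generators of $\mathbb{N}^k$ and $[0,m]=\{t\in\mathbb{R}^k:0\le t\le m\}$. Let $\varepsilon_0,\dots,\varepsilon_k$ be the standard basis of $\mathbb{R}^{k+1}$, $v_0=\frac1{k+1}\sum_{i=0}^k\varepsilon_i$, and for $f\in P_k$, $n\in\operatorname{range}(f)\setminus\{0\}$, $v_{f,n}=\frac1n\sum_{j: f(j)<n}\varepsilon_j$. Define $\phi_f:[0,h(f)]\to\mathbb{R}^{k+1}$ by $\phi_f(0)=v_0$ and, for $t\ne0$, $\phi_f(t)=(1-\|t\|_\infty)v_0+\frac{\|t\|_\infty}{\|t\|_1}\sum_{n\in\operatorname{range}(f)\setminus\{0\}}t_nv_{f,n}$.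 *)

theory Defs
  imports Complex_Main
begin

text \<open>Functions on {0..k} are represented as nat => nat; only the values at
  indices j <= k matter.  Vectors in N^k / R^k are nat => _, indexed by 1..k;
  vectors in R^(k+1) are nat => real, indexed by 0..k.\<close>

definition is_placing :: "nat \<Rightarrow> (nat \<Rightarrow> nat) \<Rightarrow> bool" where
  "is_placing k f \<longleftrightarrow>
     (\<forall>j\<le>k. f j \<le> k \<and> f j = card {i. i \<le> k \<and> f i < f j})"

definition placing_le :: "nat \<Rightarrow> (nat \<Rightarrow> nat) \<Rightarrow> (nat \<Rightarrow> nat) \<Rightarrow> bool" where
  "placing_le k g f \<longleftrightarrow> (\<forall>j\<le>k. g j \<le> f j)"

definition height :: "nat \<Rightarrow> (nat \<Rightarrow> nat) \<Rightarrow> nat \<Rightarrow> nat" where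
  "height k f i = (if \<exists>j\<le>k. f j = i then 1 else 0)"

definition in_box :: "nat \<Rightarrow> (nat \<Rightarrow> nat) \<Rightarrow> (nat \<Rightarrow> real) \<Rightarrow> bool" where
  "in_box k m t \<longleftrightarrow> (\<forall>i\<in>{1..k}. 0 \<le> t i \<and> t i \<le> real (m i))"

definition norm_inf :: "nat \<Rightarrow> (nat \<Rightarrow> real) \<Rightarrow> real" where
  "norm_inf k t = Max ((\<lambda>i. \<bar>t i\<bar>) ` {1..k})"

definition norm_one :: "nat \<Rightarrow> (nat \<Rightarrow> real) \<Rightarrow> real" where
  "norm_one k t = (\<Sum>i=1..k. \<bar>t i\<bar>)"

definition v0 :: "nat \<Rightarrow> nat \<Rightarrow> real" where
  "v0 k j = 1 / real (k + 1)"

definition vfn :: "(nat \<Rightarrow> nat) \<Rightarrow> nat \<Rightarrow> nat \<Rightarrow> real" where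
  "vfn f n j = (if f j < n then 1 / real n else 0)"

definition phi :: "nat \<Rightarrow> (nat \<Rightarrow> nat) \<Rightarrow> (nat \<Rightarrow> real) \<Rightarrow> nat \<Rightarrow> real" where
  "phi k f t j =
     (if (\<forall>i\<in>{1..k}. t i = 0) then v0 k j
      else (1 - norm_inf k t) * v0 k j
           + (norm_inf k t / norm_one k t) *
             (\<Sum>n\<in>f ` {0..k} - {0}. t n * vfn f n j))"

end

theory Submission
  imports Defs
begin

(* The point phi_f(t) depends on an index j only through the value f(j):
   phi_f(t)_j = L(f j) for the "level function"
     L(m) = c + B * S(m),   S(m) = sum over n in range(f)-{0} with m < n of t_n / n,
   with B = |t|_inf / |t|_1 > 0 (or phi constant when t = 0).  Since t >= 0, L is antitone;
   it drops strictly when m passes a value i of f with t_i > 0, and it is constant across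
   a gap of range(f) ending at a value i with t_i = 0.
   The file first proves two facts about an arbitrary placing f composed with an arbitrary
   antitone L: a superlevel set {j. L(f j) > r} of cardinality i is exactly {j. f j < i},
   and such an r exists iff i is a value of f at which L drops strictly. *)

lemma placing_le_k: "is_placing k f \<Longrightarrow> j \<le> k \<Longrightarrow> f j \<le> k"
  unfolding is_placing_def by blast

lemma placing_card_below:
  "is_placing k f \<Longrightarrow> j \<le> k \<Longrightarrow> card {l. l \<le> k \<and> f l < f j} = f j"
  unfolding is_placing_def by auto

lemma placing_superlevel_set:
  fixes L :: "nat \<Rightarrow> real"
  assumes f: "is_placing k f" and L: "\<And>a b. a \<le> b \<Longrightarrow> L b \<le> L a"
    and card_X: "card {j. j \<le> k \<and> L (f j) > r} = i" and "i \<le> k"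
  shows "{j. j \<le> k \<and> L (f j) > r} = {j. j \<le> k \<and> f j < i}"
    and "\<exists>j\<le>k. f j = i \<and> L i \<le> r"
proof -
  let ?X = "{j. j \<le> k \<and> L (f j) > r}"
  have "\<not> {..k} \<subseteq> ?X"
  proof
    assume "{..k} \<subseteq> ?X"
    then have "card {..k} \<le> card ?X" by (intro card_mono) auto
    with card_X \<open>i \<le> k\<close> show False by simp
  qed
  then have ne: "f ` ({..k} - ?X) \<noteq> {}" by blast
  define m where "m = Min (f ` ({..k} - ?X))"
  have "m \<in> f ` ({..k} - ?X)" unfolding m_def using ne by (intro Min_in) auto
  then obtain j1 where j1: "j1 \<le> k" "\<not> L (f j1) > r" "f j1 = m" by blast
  have X_eq: "?X = {j. j \<le> k \<and> f j < f j1}"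
  proof (intro set_eqI iffI)
    fix j assume j: "j \<in> ?X"
    have "\<not> f j1 \<le> f j" using L[of "f j1" "f j"] j j1 by force
    with j show "j \<in> {j. j \<le> k \<and> f j < f j1}" by auto
  next
    fix j assume j: "j \<in> {j. j \<le> k \<and> f j < f j1}"
    show "j \<in> ?X"
    proof (rule ccontr)
      assume "j \<notin> ?X"
      then have "m \<le> f j" unfolding m_def using j by (intro Min_le) auto
      with j j1 show False by auto
    qed
  qed
  have "f j1 = i" using card_X X_eq placing_card_below[OF f j1(1)] by simp
  with X_eq j1 show "?X = {j. j \<le> k \<and> f j < i}" and "\<exists>j\<le>k. f j = i \<and> L i \<le> r"
    by auto
qed

lemma placing_superlevel_card_iff:
  fixes L :: "nat \<Rightarrow> real"
  assumes f: "is_placing k f" and L: "\<And>a b. a \<le> b \<Longrightarrow> L b \<le> L a" and "i \<le> k"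
  shows "(\<exists>r. card {j. j \<le> k \<and> L (f j) > r} = i) \<longleftrightarrow>
         (\<exists>j\<le>k. f j = i) \<and> (\<forall>j\<le>k. f j < i \<longrightarrow> L i < L (f j))"
proof
  assume "\<exists>r. card {j. j \<le> k \<and> L (f j) > r} = i"
  then obtain r where r: "card {j. j \<le> k \<and> L (f j) > r} = i" by blast
  from placing_superlevel_set[OF f L r \<open>i \<le> k\<close>] obtain j1
    where X_eq: "{j. j \<le> k \<and> L (f j) > r} = {j. j \<le> k \<and> f j < i}"
      and j1: "j1 \<le> k" "f j1 = i" "L i \<le> r" by blast
  have "L i < L (f j)" if "j \<le> k" "f j < i" for j
  proof -
    from that X_eq have "L (f j) > r" by blast
    with j1(3) show ?thesis by linarith
  qed
  with j1 show "(\<exists>j\<le>k. f j = i) \<and> (\<forall>j\<le>k. f j < i \<longrightarrow> L i < L (f j))" by blast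
next
  assume "(\<exists>j\<le>k. f j = i) \<and> (\<forall>j\<le>k. f j < i \<longrightarrow> L i < L (f j))"
  then obtain j1 where j1: "j1 \<le> k" "f j1 = i" and drop: "\<forall>j\<le>k. f j < i \<longrightarrow> L i < L (f j)"
    by blast
  have "L (f j) > L i \<longleftrightarrow> f j < i" if "j \<le> k" for j
    using drop that L[of i "f j"] by (cases "f j < i") auto
  then have "{j. j \<le> k \<and> L (f j) > L i} = {j. j \<le> k \<and> f j < i}" by blast
  then have "card {j. j \<le> k \<and> L (f j) > L i} = i"
    using placing_card_below[OF f j1(1)] j1(2) by simp
  then show "\<exists>r. card {j. j \<le> k \<and> L (f j) > r} = i" by blast
qed

lemma placing_previous_value:
  assumes f: "is_placing k f" and j1: "j1 \<le> k" "f j1 = i" and "1 \<le> i"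
  obtains j2 where "j2 \<le> k" "f j2 < i" "\<forall>n\<in>f ` {0..k} - {0}. \<not> (f j2 < n \<and> n < i)"
proof -
  let ?B = "{j. j \<le> k \<and> f j < i}"
  have "card ?B = i" using placing_card_below[OF f j1(1)] j1(2) by simp
  with \<open>1 \<le> i\<close> have "?B \<noteq> {}" by (intro notI) simp
  then have "Max (f ` ?B) \<in> f ` ?B" by (intro Max_in) auto
  then obtain j2 where j2: "j2 \<le> k" "f j2 < i" and p: "f j2 = Max (f ` ?B)" by auto
  have "\<not> (f j2 < n \<and> n < i)" if "n \<in> f ` {0..k} - {0}" for n
  proof
    assume n: "f j2 < n \<and> n < i"
    from that obtain j where "j \<le> k" "f j = n" by auto
    with n have "n \<le> f j2" unfolding p by (intro Max_ge) auto
    with n show False by simp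
  qed
  with j2 that show ?thesis by blast
qed

lemma two_valued_placing:
  assumes X: "X \<subseteq> {..k}" "card X = i" and i: "1 \<le> i" "i \<le> k"
    and g: "\<forall>j\<le>k. g j = (if j \<in> X then 0 else i)"
  shows "is_placing k g" and "\<forall>l\<in>{1..k}. height k g l = (if l = i then 1 else 0)"
proof -
  have "g l < i \<longleftrightarrow> l \<in> X" if "l \<le> k" for l
    using g that i by simp
  then have below_i: "{l. l \<le> k \<and> g l < i} = X" using X(1) by blast
  show "is_placing k g"
    unfolding is_placing_def
  proof (intro allI impI conjI)
    fix j assume "j \<le> k"
    then show "g j \<le> k" using g i by simp
    show "g j = card {l. l \<le> k \<and> g l < g j}"
    proof (cases "j \<in> X")
      case True
      then show ?thesis using g \<open>j \<le> k\<close> by simp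
    next
      case False
      then show ?thesis using g \<open>j \<le> k\<close> below_i X(2) by simp
    qed
  qed
  have "\<not> {..k} \<subseteq> X"
  proof
    assume "{..k} \<subseteq> X"
    then have "card {..k} \<le> card X"
      using finite_subset[OF X(1)] by (intro card_mono) simp_all
    with X(2) i show False by simp
  qed
  then obtain j1 where "j1 \<le> k" "j1 \<notin> X" by auto
  with g have attained: "\<exists>j\<le>k. g j = i" by auto
  have only_two_values: "g j = 0 \<or> g j = i" if "j \<le> k" for j
    using g that by simp
  show "\<forall>l\<in>{1..k}. height k g l = (if l = i then 1 else 0)"
  proof
    fix l assume "l \<in> {1..k}"
    with attained only_two_values show "height k g l = (if l = i then 1 else 0)"
      unfolding height_def by (cases "l = i") force+
  qed
qed

lemma box_nonneg_on_range:
  assumes f: "is_placing k f" and box: "in_box k (height k f) t"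
  shows "\<forall>n\<in>f ` {0..k} - {0}. 0 \<le> t n"
proof
  fix n assume "n \<in> f ` {0..k} - {0}"
  with placing_le_k[OF f] have "n \<in> {1..k}" by fastforce
  with box show "0 \<le> t n" unfolding in_box_def by blast
qed

text \<open>\<open>S(m) = \<Sum> t\<^sub>n / n\<close> over the nonzero values \<open>n > m\<close> of \<open>f\<close>: the part of \<open>\<phi>\<^sub>f(t)\<^sub>j\<close>
  coming from the vectors \<open>v\<^sub>f\<^sub>,\<^sub>n\<close>, as a function of \<open>m = f j\<close>.\<close>
definition level_sum :: "nat \<Rightarrow> (nat \<Rightarrow> nat) \<Rightarrow> (nat \<Rightarrow> real) \<Rightarrow> nat \<Rightarrow> real" where
  "level_sum k f t m = (\<Sum>n\<in>f ` {0..k} - {0}. t n * (if m < n then 1 / real n else 0))"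

definition phi_level :: "nat \<Rightarrow> (nat \<Rightarrow> nat) \<Rightarrow> (nat \<Rightarrow> real) \<Rightarrow> nat \<Rightarrow> real" where
  "phi_level k f t m =
     (if \<forall>i\<in>{1..k}. t i = 0 then v0 k 0
      else (1 - norm_inf k t) * v0 k 0 + norm_inf k t / norm_one k t * level_sum k f t m)"

lemma phi_eq_phi_level: "phi k f t j = phi_level k f t (f j)"
  unfolding phi_def phi_level_def level_sum_def vfn_def v0_def by simp

text \<open>For nonnegative \<open>t\<close>, fewer summands survive as \<open>m\<close> grows.\<close>
lemma level_sum_antitone:
  assumes nonneg: "\<forall>n\<in>f ` {0..k} - {0}. 0 \<le> t n" and "a \<le> b"
  shows "level_sum k f t b \<le> level_sum k f t a"
  unfolding level_sum_def
proof (rule sum_mono)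
  fix n assume "n \<in> f ` {0..k} - {0}"
  with nonneg have "0 \<le> t n" by blast
  with \<open>a \<le> b\<close> show "t n * (if b < n then 1 / real n else 0) \<le> t n * (if a < n then 1 / real n else 0)"
    by auto
qed

lemma level_sum_drop:
  assumes nonneg: "\<forall>n\<in>f ` {0..k} - {0}. 0 \<le> t n" and "a < i" and i: "i \<in> f ` {0..k} - {0}"
  shows "level_sum k f t i + t i / real i \<le> level_sum k f t a"
proof -
  let ?R = "f ` {0..k} - {0}"
  let ?d = "\<lambda>n. t n * (if a < n then 1 / real n else 0) - t n * (if i < n then 1 / real n else 0)"
  have diff: "level_sum k f t a - level_sum k f t i = sum ?d ?R"
    unfolding level_sum_def by (simp add: sum_subtractf)
  have "?d i \<le> sum ?d ?R"
  proof (rule member_le_sum)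
    fix n assume "n \<in> ?R - {i}"
    with nonneg have "0 \<le> t n" by blast
    with \<open>a < i\<close> show "0 \<le> ?d n" by auto
  qed (use i in auto)
  moreover have "?d i = t i / real i" using \<open>a < i\<close> by simp
  ultimately show ?thesis using diff by linarith
qed

lemma level_sum_flat:
  assumes "t i = 0" and gap: "\<forall>n\<in>f ` {0..k} - {0}. \<not> (a < n \<and> n < i)" and "a < i"
  shows "level_sum k f t a = level_sum k f t i"
  unfolding level_sum_def
proof (rule sum.cong)
  fix n assume "n \<in> f ` {0..k} - {0}"
  with gap \<open>t i = 0\<close> \<open>a < i\<close>
  show "t n * (if a < n then 1 / real n else 0) = t n * (if i < n then 1 / real n else 0)"
    by (cases "n = i") auto
qed simp

lemma phi_scale_pos:
  assumes "i \<in> {1..k}" "t i \<noteq> 0"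
  shows "0 < norm_inf k t / norm_one k t"
proof -
  have "\<bar>t i\<bar> \<le> norm_inf k t" unfolding norm_inf_def using assms(1) by (intro Max_ge) auto
  moreover have "\<bar>t i\<bar> \<le> norm_one k t" unfolding norm_one_def
    using assms(1) by (intro member_le_sum) auto
  ultimately show ?thesis using assms(2) by simp
qed

lemma phi_level_antitone:
  assumes nonneg: "\<forall>n\<in>f ` {0..k} - {0}. 0 \<le> t n" and "a \<le> b"
  shows "phi_level k f t b \<le> phi_level k f t a"
proof (cases "\<forall>i\<in>{1..k}. t i = 0")
  case False
  then have "0 \<le> norm_inf k t / norm_one k t" using phi_scale_pos by (meson less_imp_le)
  then have "norm_inf k t / norm_one k t * level_sum k f t b
             \<le> norm_inf k t / norm_one k t * level_sum k f t a"
    using level_sum_antitone[OF assms] by (rule mult_left_mono[rotated])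
  then show ?thesis unfolding phi_level_def if_not_P[OF False] by simp
qed (simp add: phi_level_def)

lemma phi_level_strict_drop:
  assumes nonneg: "\<forall>n\<in>f ` {0..k} - {0}. 0 \<le> t n" and i: "i \<in> {1..k}" "i \<in> f ` {0..k}"
    and "0 < t i" and "a < i"
  shows "phi_level k f t i < phi_level k f t a"
proof -
  have not_zero: "\<not> (\<forall>i\<in>{1..k}. t i = 0)" using i(1) \<open>0 < t i\<close> by force
  have "0 < t i / real i" using \<open>0 < t i\<close> i(1) by simp
  with level_sum_drop[OF nonneg \<open>a < i\<close>] i
  have "level_sum k f t i < level_sum k f t a" by fastforce
  then have "norm_inf k t / norm_one k t * level_sum k f t i
             < norm_inf k t / norm_one k t * level_sum k f t a"
    using phi_scale_pos[where t = t, OF i(1)] \<open>0 < t i\<close> by (intro mult_strict_left_mono) auto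
  then show ?thesis unfolding phi_level_def if_not_P[OF not_zero] by simp
qed

text \<open>If \<open>t\<^sub>i = 0\<close>, the level function
  does not change between \<open>i\<close> and the previous value of \<open>f\<close>.\<close>
lemma phi_level_drop_iff:
  assumes f: "is_placing k f" and box: "in_box k (height k f) t" and i: "i \<in> {1..k}"
  shows "(\<exists>j\<le>k. f j = i) \<and> (\<forall>j\<le>k. f j < i \<longrightarrow> phi_level k f t i < phi_level k f t (f j))
         \<longleftrightarrow> t i \<noteq> 0"
proof
  assume "(\<exists>j\<le>k. f j = i) \<and> (\<forall>j\<le>k. f j < i \<longrightarrow> phi_level k f t i < phi_level k f t (f j))"
  then obtain j1 where j1: "j1 \<le> k" "f j1 = i"
    and drop: "\<forall>j\<le>k. f j < i \<longrightarrow> phi_level k f t i < phi_level k f t (f j)" by blast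
  obtain j2 where j2: "j2 \<le> k" "f j2 < i" and gap: "\<forall>n\<in>f ` {0..k} - {0}. \<not> (f j2 < n \<and> n < i)"
    using placing_previous_value[OF f j1] i by auto
  show "t i \<noteq> 0"
  proof
    assume "t i = 0"
    from level_sum_flat[where t = t and i = i and k = k and f = f, OF this gap j2(2)]
    have "phi_level k f t (f j2) = phi_level k f t i" unfolding phi_level_def by simp
    with drop j2 show False by force
  qed
next
  assume "t i \<noteq> 0"
  moreover have "0 \<le> t i" "t i \<le> real (height k f i)" using box i unfolding in_box_def by auto
  ultimately have "0 < t i" and "\<exists>j\<le>k. f j = i"
    unfolding height_def by (auto split: if_splits)
  with phi_level_strict_drop[OF box_nonneg_on_range[OF f box] i]
  show "(\<exists>j\<le>k. f j = i) \<and> (\<forall>j\<le>k. f j < i \<longrightarrow> phi_level k f t i < phi_level k f t (f j))"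
    by fastforce
qed

theorem lemma5p9:
  fixes k :: nat and f :: "nat \<Rightarrow> nat" and t :: "nat \<Rightarrow> real"
  assumes "k \<ge> 1" and "is_placing k f" and "in_box k (height k f) t"
  shows "\<forall>i\<in>{1..k}.
           (t i \<noteq> 0 \<longleftrightarrow>
              (\<exists>r::real. card {j. j \<le> k \<and> phi k f t j > r} = i))
         \<and> (\<forall>(r::real) (g::nat \<Rightarrow> nat).
              card {j. j \<le> k \<and> phi k f t j > r} = i \<longrightarrow>
              (\<forall>j\<le>k. g j = (if phi k f t j \<le> r then i else 0)) \<longrightarrow>
              is_placing k g \<and>
              (\<forall>l\<in>{1..k}. height k g l = (if l = i then 1 else 0)) \<and>
              placing_le k g f)"
  unfolding phi_eq_phi_level
proof (intro ballI conjI allI impI)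
  fix i assume i: "i \<in> {1..k}"
  then have i_bounds: "1 \<le> i" "i \<le> k" by auto
  let ?L = "phi_level k f t"
  note L_antitone = phi_level_antitone[OF box_nonneg_on_range[OF assms(2,3)]]
  show "t i \<noteq> 0 \<longleftrightarrow> (\<exists>r. card {j. j \<le> k \<and> ?L (f j) > r} = i)"
    using placing_superlevel_card_iff[where L = ?L, OF assms(2) L_antitone i_bounds(2)]
      phi_level_drop_iff[OF assms(2,3) i] by blast
  fix r :: real and g :: "nat \<Rightarrow> nat"
  let ?X = "{j. j \<le> k \<and> ?L (f j) > r}"
  assume card_X: "card ?X = i" and g: "\<forall>j\<le>k. g j = (if ?L (f j) \<le> r then i else 0)"
  have X_eq: "?X = {j. j \<le> k \<and> f j < i}"
    by (rule placing_superlevel_set(1)[OF assms(2) L_antitone card_X i_bounds(2)])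
  have g_by_X: "\<forall>j\<le>k. g j = (if j \<in> ?X then 0 else i)" using g by auto
  have X_sub: "?X \<subseteq> {..k}" by auto
  show "is_placing k g"
    by (rule two_valued_placing(1)[OF X_sub card_X i_bounds g_by_X])
  show "height k g l = (if l = i then 1 else 0)" if "l \<in> {1..k}" for l
    using two_valued_placing(2)[OF X_sub card_X i_bounds g_by_X] that by blast
  show "placing_le k g f"
    unfolding placing_le_def
  proof (intro allI impI)
    fix j assume "j \<le> k"
    then have "j \<notin> ?X \<Longrightarrow> i \<le> f j" using X_eq by auto
    with g_by_X \<open>j \<le> k\<close> show "g j \<le> f j" by auto
  qed
qed

end
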